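(* Let $(G,r)$ be a symmetric group, $r(a,b)=({}^ab,a^b)$, with associated left brace $(G,+,\cdot)$. (1) If $(G,r)$ satisfies lri, then the brace satisfies Raut, and $({}^{({}^va)}u)({}^av)=({}^au)({}^{(a^u)}v)$ for all $a,u,v\in G$. (2) Suppose $G=G(X,r_0)$ and $r=r_G$ is the associated symmetric group of a non-degenerate symmetric set $(X,r_0)$ satisfying lri. If the brace $(G,+,\cdot)$ satisfies Raut, then $(G,r)$ satisfies lri. Consequently, for such $(X,r_0)$, $(G,r_G)$ satisfies lri if and only if $(G,+,\cdot)$ satisfies Raut.
   Context: A symmetric set is a pair $(X,r)$, $X$ nonempty, $r(x,y)=({}^xy,x^y)$ a non-degenerate, involutive bijection of $X\times X$ satisfying $r^{12}r^{23}r^{12}=r^{23}r^{12}r^{23}$ on $X^3$. Condition lri on $(X,r)$: $({}^xy)^x=y={}^x(y^x)$ for all $x,y\in X$. $G(X,r_0)$ is the group generated by $X$ with relations $xy=zt$ whenever $r_0(x,y)=(z,t)$. A symmetric group is $(G,r)$, $G$ a group, $r(u,v)=({}^uv,u^v)$ an involutive bijection of $G\times G$ with ${}^a1=1,{}^1u=u,1^u=1,a^1=a$, ${}^{ab}u={}^a({}^bu)$, $a^{uv}=(a^u)^v$, ${}^a(uv)=({}^au)({}^{a^u}v)$, $(ab)^u=(a^{{}^bu})(b^u)$, $uv=({}^uv)(u^v)$; the associated symmetric group of $(X,r_0)$ is $G(X,r_0)$ with the unique such braiding $r_G$ extending $r_0$. The associated left brace has $a+b:=a({}^{a^{-1}}b)$.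 Condition Raut on the brace: $(a+b)^c=a^c+b^c$ for all $a,b,c\in G$. Condition lri on $(G,r)$: $({}^ab)^a=b={}^a(b^a)$ for all $a,b\in G$. *)

theory Defs
  imports "HOL-Algebra.Group"
begin

text \<open>For r(u,v) = (u-left-acts-on-v, u-right-acted-by-v) we write
  lft r u v for the first component and rgt r u v for the second.\<close>

definition lft :: "('a \<times> 'a \<Rightarrow> 'a \<times> 'a) \<Rightarrow> 'a \<Rightarrow> 'a \<Rightarrow> 'a" where
  "lft r u v = fst (r (u, v))"

definition rgt :: "('a \<times> 'a \<Rightarrow> 'a \<times> 'a) \<Rightarrow> 'a \<Rightarrow> 'a \<Rightarrow> 'a" where
  "rgt r u v = snd (r (u, v))"

definition r12 :: "('a \<times> 'a \<Rightarrow> 'a \<times> 'a) \<Rightarrow> 'a \<times> 'a \<times> 'a \<Rightarrow> 'a \<times> 'a \<times> 'a" where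
  "r12 r t = (case t of (x, y, z) \<Rightarrow> (fst (r (x, y)), snd (r (x, y)), z))"

definition r23 :: "('a \<times> 'a \<Rightarrow> 'a \<times> 'a) \<Rightarrow> 'a \<times> 'a \<times> 'a \<Rightarrow> 'a \<times> 'a \<times> 'a" where
  "r23 r t = (case t of (x, y, z) \<Rightarrow> (x, fst (r (y, z)), snd (r (y, z))))"

definition symmetric_set :: "'a set \<Rightarrow> ('a \<times> 'a \<Rightarrow> 'a \<times> 'a) \<Rightarrow> bool" where
  "symmetric_set X r \<longleftrightarrow>
     X \<noteq> {} \<and>
     bij_betw r (X \<times> X) (X \<times> X) \<and>
     (\<forall>p \<in> X \<times> X. r (r p) = p) \<and>
     (\<forall>x \<in> X. bij_betw (\<lambda>y. lft r x y) X X \<and> bij_betw (\<lambda>y. rgt r y x) X X) \<and>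
     (\<forall>t \<in> X \<times> X \<times> X. r12 r (r23 r (r12 r t)) = r23 r (r12 r (r23 r t)))"

definition lri_set :: "'a set \<Rightarrow> ('a \<times> 'a \<Rightarrow> 'a \<times> 'a) \<Rightarrow> bool" where
  "lri_set X r \<longleftrightarrow>
     (\<forall>x \<in> X. \<forall>y \<in> X. rgt r (lft r x y) x = y \<and> y = lft r x (rgt r y x))"

definition symmetric_group :: "('g, 'm) monoid_scheme \<Rightarrow> ('g \<times> 'g \<Rightarrow> 'g \<times> 'g) \<Rightarrow> bool" where
  "symmetric_group G r \<longleftrightarrow>
     group G \<and>
     bij_betw r (carrier G \<times> carrier G) (carrier G \<times> carrier G) \<and>
     (\<forall>p \<in> carrier G \<times> carrier G. r (r p) = p) \<and>
     (\<forall>a \<in> carrier G. lft r a \<one>\<^bsub>G\<^esub> = \<one>\<^bsub>G\<^esub> \<and> lft r \<one>\<^bsub>G\<^esub> a = a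
        \<and> rgt r \<one>\<^bsub>G\<^esub> a = \<one>\<^bsub>G\<^esub> \<and> rgt r a \<one>\<^bsub>G\<^esub> = a) \<and>
     (\<forall>a \<in> carrier G. \<forall>b \<in> carrier G. \<forall>u \<in> carrier G.
        lft r (a \<otimes>\<^bsub>G\<^esub> b) u = lft r a (lft r b u)) \<and>
     (\<forall>a \<in> carrier G. \<forall>u \<in> carrier G. \<forall>v \<in> carrier G.
        rgt r a (u \<otimes>\<^bsub>G\<^esub> v) = rgt r (rgt r a u) v) \<and>
     (\<forall>a \<in> carrier G. \<forall>u \<in> carrier G. \<forall>v \<in> carrier G.
        lft r a (u \<otimes>\<^bsub>G\<^esub> v) = lft r a u \<otimes>\<^bsub>G\<^esub> lft r (rgt r a u) v) \<and>
     (\<forall>a \<in> carrier G. \<forall>b \<in> carrier G. \<forall>u \<in> carrier G.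
        rgt r (a \<otimes>\<^bsub>G\<^esub> b) u = rgt r a (lft r b u) \<otimes>\<^bsub>G\<^esub> rgt r b u) \<and>
     (\<forall>u \<in> carrier G. \<forall>v \<in> carrier G.
        u \<otimes>\<^bsub>G\<^esub> v = lft r u v \<otimes>\<^bsub>G\<^esub> rgt r u v)"

definition brace_add :: "('g, 'm) monoid_scheme \<Rightarrow> ('g \<times> 'g \<Rightarrow> 'g \<times> 'g) \<Rightarrow> 'g \<Rightarrow> 'g \<Rightarrow> 'g" where
  "brace_add G r a b = a \<otimes>\<^bsub>G\<^esub> lft r (inv\<^bsub>G\<^esub> a) b"

definition Raut :: "('g, 'm) monoid_scheme \<Rightarrow> ('g \<times> 'g \<Rightarrow> 'g \<times> 'g) \<Rightarrow> bool" where
  "Raut G r \<longleftrightarrow>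
     (\<forall>a \<in> carrier G. \<forall>b \<in> carrier G. \<forall>c \<in> carrier G.
        rgt r (brace_add G r a b) c = brace_add G r (rgt r a c) (rgt r b c))"

definition lri_group :: "('g, 'm) monoid_scheme \<Rightarrow> ('g \<times> 'g \<Rightarrow> 'g \<times> 'g) \<Rightarrow> bool" where
  "lri_group G r \<longleftrightarrow>
     (\<forall>a \<in> carrier G. \<forall>b \<in> carrier G. rgt r (lft r a b) a = b \<and> b = lft r a (rgt r b a))"

text \<open>Words over X and X^-1: a letter (x, True) is x, a letter (x, False) is x^-1.\<close>
type_synonym 'x gword = "('x \<times> bool) list"

definition is_word :: "'x set \<Rightarrow> 'x gword \<Rightarrow> bool" where
  "is_word X w \<longleftrightarrow> fst ` set w \<subseteq> X"

inductive gx_eq :: "'x set \<Rightarrow> ('x \<times> 'x \<Rightarrow> 'x \<times> 'x) \<Rightarrow> 'x gword \<Rightarrow> 'x gword \<Rightarrow> bool"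
  for X r0 where
  gx_refl: "is_word X w \<Longrightarrow> gx_eq X r0 w w"
| gx_sym: "gx_eq X r0 u v \<Longrightarrow> gx_eq X r0 v u"
| gx_trans: "gx_eq X r0 u v \<Longrightarrow> gx_eq X r0 v w \<Longrightarrow> gx_eq X r0 u w"
| gx_inv: "x \<in> X \<Longrightarrow> gx_eq X r0 [(x, b), (x, \<not> b)] []"
| gx_rel: "x \<in> X \<Longrightarrow> y \<in> X \<Longrightarrow> r0 (x, y) = (z, t) \<Longrightarrow>
            gx_eq X r0 [(x, True), (y, True)] [(z, True), (t, True)]"
| gx_cong: "gx_eq X r0 u v \<Longrightarrow> is_word X p \<Longrightarrow> is_word X q \<Longrightarrow>
            gx_eq X r0 (p @ u @ q) (p @ v @ q)"

definition gx_class :: "'x set \<Rightarrow> ('x \<times> 'x \<Rightarrow> 'x \<times> 'x) \<Rightarrow> 'x gword \<Rightarrow> 'x gword set" where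
  "gx_class X r0 w = {v. gx_eq X r0 w v}"

definition GX :: "'x set \<Rightarrow> ('x \<times> 'x \<Rightarrow> 'x \<times> 'x) \<Rightarrow> 'x gword set monoid" where
  "GX X r0 = \<lparr> carrier = gx_class X r0 ` {w. is_word X w},
              mult = (\<lambda>A B. {v. \<exists>u \<in> A. \<exists>w \<in> B. gx_eq X r0 (u @ w) v}),
              one = gx_class X r0 [] \<rparr>"

definition gx_emb :: "'x set \<Rightarrow> ('x \<times> 'x \<Rightarrow> 'x \<times> 'x) \<Rightarrow> 'x \<Rightarrow> 'x gword set" where
  "gx_emb X r0 x = gx_class X r0 [(x, True)]"

text \<open>r is the braiding r_G of the associated symmetric group: a symmetric-group
  braiding on G(X,r0) extending r0 (such a braiding is unique).\<close>
definition assoc_sym_group_braiding ::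
  "'x set \<Rightarrow> ('x \<times> 'x \<Rightarrow> 'x \<times> 'x) \<Rightarrow> ('x gword set \<times> 'x gword set \<Rightarrow> 'x gword set \<times> 'x gword set) \<Rightarrow> bool" where
  "assoc_sym_group_braiding X r0 r \<longleftrightarrow>
     symmetric_group (GX X r0) r \<and>
     (\<forall>x \<in> X. \<forall>y \<in> X. r (gx_emb X r0 x, gx_emb X r0 y) =
        (gx_emb X r0 (fst (r0 (x, y))), gx_emb X r0 (snd (r0 (x, y)))))"

end

theory Submission
  imports Defs "HOL-Algebra.Generated_Groups"
begin

text \<open>Condition lri says exactly that \<open>R b a = L (inv a) b\<close>: the right action of \<open>a\<close> inverts
  its left action. Every \<open>L x\<close> is an automorphism of the additive group of the brace, so lri
  gives Raut, and the identity of part (1) comes from computing \<open>L a (u \<otimes> v) = R (u \<otimes> v) (inv a)\<close>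
  in two ways.

  Conversely, assume Raut and let \<open>E\<close> generate \<open>G\<close>, with each \<open>L e\<close> permuting \<open>E\<close> and lri holding
  on \<open>E\<close> (for \<open>G(X, r\<^sub>0)\<close>, \<open>E\<close> is the image of \<open>X\<close>). For \<open>e \<in> E\<close> the map \<open>y \<mapsto> R (L e y) e\<close> is
  additive and fixes every \<open>L b e'\<close> with \<open>e' \<in> E\<close>; since \<open>b \<otimes> e' = b + L b e'\<close>, its fixed points
  are stable under right multiplication by \<open>e'\<close> and \<open>inv e'\<close>, so it is the identity. Finally, the
  \<open>a\<close> with \<open>R (L a y) a = y\<close> for all \<open>y\<close> form a subgroup containing \<open>E\<close>, hence all of \<open>G\<close>.\<close>

locale sym_group =
  fixes G (structure) and r
  assumes symmetric_group: "symmetric_group G r"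
begin

sublocale group G
  using symmetric_group by (simp add: symmetric_group_def)

abbreviation L where "L a b \<equiv> lft r a b"
abbreviation R where "R a b \<equiv> rgt r a b"
abbreviation badd where "badd a b \<equiv> brace_add G r a b"

lemma L_closed [simp]: "a \<in> carrier G \<Longrightarrow> b \<in> carrier G \<Longrightarrow> L a b \<in> carrier G"
  and R_closed [simp]: "a \<in> carrier G \<Longrightarrow> b \<in> carrier G \<Longrightarrow> R a b \<in> carrier G"
proof -
  assume "a \<in> carrier G" "b \<in> carrier G"
  moreover have "bij_betw r (carrier G \<times> carrier G) (carrier G \<times> carrier G)"
    using symmetric_group by (simp add: symmetric_group_def)
  ultimately have "r (a, b) \<in> carrier G \<times> carrier G"
    using bij_betwE by blast
  then show "L a b \<in> carrier G" "R a b \<in> carrier G"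
    by (auto simp: lft_def rgt_def)
qed

lemma L_one [simp]: "a \<in> carrier G \<Longrightarrow> L a \<one> = \<one>"
  and one_L [simp]: "a \<in> carrier G \<Longrightarrow> L \<one> a = a"
  and one_R [simp]: "a \<in> carrier G \<Longrightarrow> R \<one> a = \<one>"
  and R_one [simp]: "a \<in> carrier G \<Longrightarrow> R a \<one> = a"
  using symmetric_group unfolding symmetric_group_def by blast+

lemma L_mult: "\<lbrakk>a \<in> carrier G; b \<in> carrier G; u \<in> carrier G\<rbrakk> \<Longrightarrow> L (a \<otimes> b) u = L a (L b u)"
  and R_mult: "\<lbrakk>a \<in> carrier G; u \<in> carrier G; v \<in> carrier G\<rbrakk> \<Longrightarrow> R a (u \<otimes> v) = R (R a u) v"
  and L_of_mult: "\<lbrakk>a \<in> carrier G; u \<in> carrier G; v \<in> carrier G\<rbrakk> \<Longrightarrow> L a (u \<otimes> v) = L a u \<otimes> L (R a u) v"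
  and R_of_mult: "\<lbrakk>a \<in> carrier G; b \<in> carrier G; u \<in> carrier G\<rbrakk> \<Longrightarrow> R (a \<otimes> b) u = R a (L b u) \<otimes> R b u"
  and mult_eq_L_R: "\<lbrakk>u \<in> carrier G; v \<in> carrier G\<rbrakk> \<Longrightarrow> u \<otimes> v = L u v \<otimes> R u v"
  using symmetric_group unfolding symmetric_group_def by blast+

lemma L_L_R: "\<lbrakk>a \<in> carrier G; b \<in> carrier G\<rbrakk> \<Longrightarrow> L (L a b) (R a b) = a"
  and R_L_R: "\<lbrakk>a \<in> carrier G; b \<in> carrier G\<rbrakk> \<Longrightarrow> R (L a b) (R a b) = b"
proof -
  assume "a \<in> carrier G" "b \<in> carrier G"
  then have "r (r (a, b)) = (a, b)"
    using symmetric_group unfolding symmetric_group_def by blast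
  moreover have "r (a, b) = (L a b, R a b)" for a b
    by (simp add: lft_def rgt_def)
  ultimately show "L (L a b) (R a b) = a" "R (L a b) (R a b) = b"
    by simp_all
qed

lemma L_inv_L [simp]: "\<lbrakk>a \<in> carrier G; u \<in> carrier G\<rbrakk> \<Longrightarrow> L (inv a) (L a u) = u"
  and L_L_inv [simp]: "\<lbrakk>a \<in> carrier G; u \<in> carrier G\<rbrakk> \<Longrightarrow> L a (L (inv a) u) = u"
  by (simp_all add: L_mult[symmetric])

lemma R_R_inv [simp]: "\<lbrakk>a \<in> carrier G; u \<in> carrier G\<rbrakk> \<Longrightarrow> R (R u a) (inv a) = u"
  by (simp add: R_mult[symmetric])

lemma L_cancel: "\<lbrakk>a \<in> carrier G; u \<in> carrier G; v \<in> carrier G\<rbrakk> \<Longrightarrow> L a u = L a v \<longleftrightarrow> u = v"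
  by (metis L_inv_L)

lemma badd_closed [simp]: "\<lbrakk>a \<in> carrier G; b \<in> carrier G\<rbrakk> \<Longrightarrow> badd a b \<in> carrier G"
  by (simp add: brace_add_def)

lemma badd_L_eq_mult: "\<lbrakk>a \<in> carrier G; b \<in> carrier G\<rbrakk> \<Longrightarrow> badd a (L a b) = a \<otimes> b"
  by (simp add: brace_add_def)

lemma L_badd:
  assumes x: "x \<in> carrier G" and a: "a \<in> carrier G" and b: "b \<in> carrier G"
  shows "L x (badd a b) = badd (L x a) (L x b)"
proof -
  have "R x a \<otimes> inv a = inv (L x a) \<otimes> x"
    using mult_eq_L_R[OF x a] x a
    by (metis L_closed R_closed inv_closed inv_solve_left' m_assoc m_closed r_inv r_one)
  have "L x (badd a b) = L x a \<otimes> L (R x a) (L (inv a) b)"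
    using x a b by (simp add: brace_add_def L_of_mult)
  also have "\<dots> = L x a \<otimes> L (R x a \<otimes> inv a) b"
    using x a b by (simp add: L_mult)
  also have "\<dots> = L x a \<otimes> L (inv (L x a) \<otimes> x) b"
    by (simp add: \<open>R x a \<otimes> inv a = inv (L x a) \<otimes> x\<close>)
  also have "\<dots> = badd (L x a) (L x b)"
    using x a b by (simp add: L_mult brace_add_def)
  finally show ?thesis .
qed

lemma badd_comm:
  assumes a: "a \<in> carrier G" and b: "b \<in> carrier G"
  shows "badd a b = badd b a"
proof -
  define c where "c = L (inv a) b"
  have c: "c \<in> carrier G" and "L a c = b"
    using a b by (simp_all add: c_def)
  have "badd a b = a \<otimes> c"
    by (simp add: brace_add_def c_def)
  also have "\<dots> = b \<otimes> R a c"
    using mult_eq_L_R[OF a c] \<open>L a c = b\<close> by simp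
  also have "R a c = L (inv b) a"
    using L_L_R[OF a c] \<open>L a c = b\<close> a b c by (metis L_inv_L R_closed)
  finally show ?thesis
    by (simp add: brace_add_def)
qed

lemma badd_left_cancel:
  "\<lbrakk>a \<in> carrier G; p \<in> carrier G; q \<in> carrier G\<rbrakk> \<Longrightarrow> badd a p = badd a q \<longleftrightarrow> p = q"
  by (simp add: brace_add_def L_cancel)

lemma R_eq_L_inv_iff_R_L_eq:
  assumes a: "a \<in> carrier G"
  shows "(\<forall>y \<in> carrier G. R y a = L (inv a) y) \<longleftrightarrow> (\<forall>y \<in> carrier G. R (L a y) a = y)"
proof
  assume "\<forall>y \<in> carrier G. R y a = L (inv a) y"
  then show "\<forall>y \<in> carrier G. R (L a y) a = y"
    using a by simp
next
  assume lri_a: "\<forall>y \<in> carrier G. R (L a y) a = y"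
  show "\<forall>y \<in> carrier G. R y a = L (inv a) y"
  proof
    fix y assume y: "y \<in> carrier G"
    have "R y a = R (L a (L (inv a) y)) a"
      using a y by simp
    also have "\<dots> = L (inv a) y"
      using lri_a[rule_format, of "L (inv a) y"] a y by simp
    finally show "R y a = L (inv a) y" .
  qed
qed

lemma lri_group_iff_R_eq_L_inv:
  "lri_group G r \<longleftrightarrow> (\<forall>a \<in> carrier G. \<forall>y \<in> carrier G. R y a = L (inv a) y)"
proof
  assume "lri_group G r"
  then show "\<forall>a \<in> carrier G. \<forall>y \<in> carrier G. R y a = L (inv a) y"
    by (simp add: lri_group_def R_eq_L_inv_iff_R_L_eq)
next
  assume "\<forall>a \<in> carrier G. \<forall>y \<in> carrier G. R y a = L (inv a) y"
  then show "lri_group G r"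
    by (simp add: lri_group_def)
qed

end

locale sym_group_lri = sym_group +
  assumes lri: "lri_group G r"
begin

lemma R_eq_L_inv: "\<lbrakk>a \<in> carrier G; b \<in> carrier G\<rbrakk> \<Longrightarrow> R b a = L (inv a) b"
  using lri lri_group_iff_R_eq_L_inv by blast

lemma L_L_eq_L:
  assumes b: "b \<in> carrier G" and c: "c \<in> carrier G"
  shows "L (L b c) b = L c b"
proof -
  define a where "a = L b c"
  have a: "a \<in> carrier G" and Rab: "R a b = c"
    using b c by (simp_all add: a_def R_eq_L_inv)
  have "L (inv (R a b)) (L a b) = b"
    using R_L_R[OF a b] a b by (simp add: R_eq_L_inv)
  then have "L (R a b) b = L a b"
    using a b by (metis L_L_inv R_closed L_closed)
  then show ?thesis
    using Rab by (simp flip: a_def)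
qed

lemma inv_L:
  assumes v: "v \<in> carrier G" and a: "a \<in> carrier G"
  shows "inv (L v a) = L v (inv a)"
proof -
  have "\<one> = L v (a \<otimes> inv a)"
    using v a by simp
  also have "\<dots> = L v a \<otimes> L (R v a) (inv a)"
    using v a by (intro L_of_mult) auto
  also have "L (R v a) (inv a) = L v (inv a)"
    using L_L_eq_L[of "inv a" v] v a by (simp add: R_eq_L_inv)
  finally have "L v a \<otimes> L v (inv a) = \<one>" ..
  then show ?thesis
    using v a by (auto intro: inv_equality[OF inv_comm])
qed

lemma L_L_mult_L_eq:
  assumes a: "a \<in> carrier G" and u: "u \<in> carrier G" and v: "v \<in> carrier G"
  shows "L (L v a) u \<otimes> L a v = L a u \<otimes> L (R a u) v"
proof -
  have "L a (u \<otimes> v) = R (u \<otimes> v) (inv a)"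
    using u v a by (simp add: R_eq_L_inv)
  also have "\<dots> = R u (L v (inv a)) \<otimes> R v (inv a)"
    using u v a by (simp add: R_of_mult)
  also have "\<dots> = L (L v a) u \<otimes> L a v"
    using u v a by (simp add: R_eq_L_inv inv_L)
  finally show ?thesis
    using a u v by (simp add: L_of_mult)
qed

lemma Raut: "Raut G r"
  unfolding Raut_def using L_badd by (simp add: R_eq_L_inv)

end

lemma (in group) generate_right_induct:
  assumes E: "E \<subseteq> carrier G" and a: "a \<in> generate G E"
    and one: "P \<one>"
    and mult: "\<And>b e. \<lbrakk>b \<in> carrier G; e \<in> E; P b\<rbrakk> \<Longrightarrow> P (b \<otimes> e)"
    and mult_inv: "\<And>b e. \<lbrakk>b \<in> carrier G; e \<in> E; P b\<rbrakk> \<Longrightarrow> P (b \<otimes> inv e)"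
  shows "P a"
proof -
  \<comment> \<open>Unlike \<open>P\<close> itself, this strengthening is closed under products.\<close>
  have "\<forall>b \<in> carrier G. P b \<longrightarrow> P (b \<otimes> a)"
    using a
  proof (induction a rule: generate.induct)
    case one
    show ?case by simp
  next
    case (incl e)
    then show ?case using mult by blast
  next
    case (inv e)
    then show ?case using mult_inv by blast
  next
    case (eng g h)
    have "g \<in> carrier G" "h \<in> carrier G"
      using eng.hyps E generate_in_carrier by blast+
    show ?case
    proof (intro ballI impI)
      fix b assume "b \<in> carrier G" "P b"
      then have "P (b \<otimes> g \<otimes> h)"
        using eng.IH \<open>g \<in> carrier G\<close> by blast
      then show "P (b \<otimes> (g \<otimes> h))"
        using \<open>b \<in> carrier G\<close> \<open>g \<in> carrier G\<close> \<open>h \<in> carrier G\<close> by (simp add: m_assoc)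
    qed
  qed
  moreover have "a \<in> carrier G"
    using a E generate_in_carrier by blast
  ultimately show ?thesis
    using one by force
qed

context sym_group
begin

lemma additive_fixes_mult_iff:
  assumes f_closed: "\<And>p. p \<in> carrier G \<Longrightarrow> f p \<in> carrier G"
    and f_badd: "\<And>p q. \<lbrakk>p \<in> carrier G; q \<in> carrier G\<rbrakk> \<Longrightarrow> f (badd p q) = badd (f p) (f q)"
    and b: "b \<in> carrier G" and c: "c \<in> carrier G" and fixes_L: "f (L b c) = L b c"
  shows "f (b \<otimes> c) = b \<otimes> c \<longleftrightarrow> f b = b"
proof -
  have "f (b \<otimes> c) = badd (L b c) (f b)"
    using b c by (simp add: badd_L_eq_mult[symmetric] f_badd fixes_L f_closed badd_comm)
  moreover have "b \<otimes> c = badd (L b c) b"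
    using b c by (simp add: badd_L_eq_mult[symmetric] badd_comm)
  ultimately show ?thesis
    using b c f_closed by (simp add: badd_left_cancel)
qed

lemma L_closed_generators:
  assumes E: "E \<subseteq> carrier G" and a: "a \<in> generate G E" and e: "e \<in> E"
    and L_perm: "\<And>e. e \<in> E \<Longrightarrow> L e ` E = E"
  shows "L a e \<in> E"
  using a e
proof (induction a arbitrary: e rule: generate.induct)
  case (inv h)
  then obtain e' where "e' \<in> E" "L h e' = e"
    using L_perm by (metis imageE)
  moreover have "h \<in> carrier G" "e' \<in> carrier G"
    using inv.hyps \<open>e' \<in> E\<close> E by blast+
  ultimately show ?case
    by auto
next
  case (eng g h)
  then show ?case
    using E generate_in_carrier by (simp add: L_mult subsetD)
qed (use E L_perm in auto)

lemma lri_group_if_lri_generators: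
  assumes E: "E \<subseteq> carrier G" and gen: "carrier G = generate G E"
    and lri_E: "\<And>e y. \<lbrakk>e \<in> E; y \<in> carrier G\<rbrakk> \<Longrightarrow> R (L e y) e = y"
  shows "lri_group G r"
proof -
  have "\<forall>y \<in> carrier G. R (L a y) a = y" if "a \<in> generate G E" for a
    using that
  proof (induction a rule: generate.induct)
    case (inv e)
    have e: "e \<in> carrier G"
      using inv.hyps E by blast
    then have "\<forall>y \<in> carrier G. R y e = L (inv e) y"
      using inv.hyps lri_E R_eq_L_inv_iff_R_L_eq by blast
    with e show ?case
      by (metis L_closed R_R_inv inv_closed)
  next
    case (eng g h)
    then show ?case
      using E generate_in_carrier by (simp add: L_mult R_mult)
  qed (use E lri_E in auto)
  then have "\<forall>a \<in> carrier G. \<forall>y \<in> carrier G. R (L a y) a = y"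
    by (simp flip: gen)
  then show ?thesis
    unfolding lri_group_iff_R_eq_L_inv using R_eq_L_inv_iff_R_L_eq by blast
qed

lemma R_L_generator_if_Raut:
  assumes Raut: "Raut G r" and E: "E \<subseteq> carrier G" and gen: "carrier G = generate G E"
    and L_perm: "\<And>e. e \<in> E \<Longrightarrow> L e ` E = E"
    and lri_E: "\<And>e e'. \<lbrakk>e \<in> E; e' \<in> E\<rbrakk> \<Longrightarrow> R (L e e') e = e'"
    and e: "e \<in> E" and y: "y \<in> carrier G"
  shows "R (L e y) e = y"
proof -
  define f where "f y = R (L e y) e" for y
  have e_carrier: "e \<in> carrier G"
    using e E by blast
  have f_closed: "f p \<in> carrier G" if "p \<in> carrier G" for p
    using that e_carrier by (simp add: f_def)
  have f_badd: "f (badd p q) = badd (f p) (f q)" if "p \<in> carrier G" "q \<in> carrier G" for p q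
    using that e_carrier Raut by (simp add: f_def L_badd Raut_def)
  have fixes_L: "f (L b c) = L b c" if "b \<in> carrier G" "c \<in> E" for b c
  proof -
    have "L b c \<in> E"
      using L_closed_generators[OF E _ \<open>c \<in> E\<close> L_perm] \<open>b \<in> carrier G\<close> gen by blast
    then show ?thesis
      using e lri_E \<open>c \<in> E\<close> by (simp add: f_def)
  qed
  have fixes_mult_iff: "f (b \<otimes> c) = b \<otimes> c \<longleftrightarrow> f b = b" if "b \<in> carrier G" "c \<in> E" for b c
    using that E fixes_L additive_fixes_mult_iff[OF f_closed f_badd] by blast
  have "f y = y"
    using E y[unfolded gen]
  proof (rule generate_right_induct)
    show "f \<one> = \<one>"
      using e_carrier by (simp add: f_def)
  next
    fix b c assume "b \<in> carrier G" "c \<in> E" "f b = b"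
    then show "f (b \<otimes> c) = b \<otimes> c"
      using fixes_mult_iff by blast
  next
    fix b c assume b: "b \<in> carrier G" and c: "c \<in> E" and "f b = b"
    have c_carrier: "c \<in> carrier G"
      using c E by blast
    then have "b \<otimes> inv c \<otimes> c = b"
      using b by (simp add: m_assoc)
    then show "f (b \<otimes> inv c) = b \<otimes> inv c"
      using fixes_mult_iff[of "b \<otimes> inv c" c] b c c_carrier \<open>f b = b\<close> by simp
  qed
  then show ?thesis
    by (simp add: f_def)
qed

lemma lri_group_if_Raut:
  assumes Raut: "Raut G r" and E: "E \<subseteq> carrier G" and gen: "carrier G = generate G E"
    and L_perm: "\<And>e. e \<in> E \<Longrightarrow> L e ` E = E"
    and lri_E: "\<And>e e'. \<lbrakk>e \<in> E; e' \<in> E\<rbrakk> \<Longrightarrow> R (L e e') e = e'"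
  shows "lri_group G r"
  using E gen R_L_generator_if_Raut[OF Raut E gen L_perm lri_E]
  by (rule lri_group_if_lri_generators)

end

lemma gx_eq_is_word:
  assumes "gx_eq X r0 u v" and r0_X: "r0 ` (X \<times> X) \<subseteq> X \<times> X"
  shows "is_word X u \<and> is_word X v"
  using assms(1)
proof (induction rule: gx_eq.induct)
  case (gx_rel x y z t)
  then have "(z, t) \<in> X \<times> X"
    using r0_X by (metis image_subset_iff mem_Sigma_iff)
  with gx_rel show ?case
    by (simp add: is_word_def)
qed (auto simp: is_word_def)

lemma gx_class_eq: "gx_eq X r0 u v \<Longrightarrow> gx_class X r0 u = gx_class X r0 v"
  unfolding gx_class_def by (auto intro: gx_eq.gx_sym gx_eq.gx_trans)

lemma GX_mult_gx_class:
  assumes r0_X: "r0 ` (X \<times> X) \<subseteq> X \<times> X" and u: "is_word X u" and w: "is_word X w"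
  shows "gx_class X r0 u \<otimes>\<^bsub>GX X r0\<^esub> gx_class X r0 w = gx_class X r0 (u @ w)"
proof -
  have "gx_eq X r0 (u @ w) v"
    if "gx_eq X r0 u u'" "gx_eq X r0 w w'" "gx_eq X r0 (u' @ w') v" for u' w' v
  proof -
    have "is_word X u'"
      using gx_eq_is_word[OF that(1) r0_X] by simp
    have "gx_eq X r0 ([] @ u @ w) ([] @ u' @ w)"
      using gx_eq.gx_cong[OF that(1), of "[]" w] w by (simp add: is_word_def)
    moreover have "gx_eq X r0 (u' @ w @ []) (u' @ w' @ [])"
      using gx_eq.gx_cong[OF that(2), of u' "[]"] \<open>is_word X u'\<close> by (simp add: is_word_def)
    ultimately show ?thesis
      using that(3) by (auto intro: gx_eq.gx_trans)
  qed
  moreover have "gx_eq X r0 u u" "gx_eq X r0 w w"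
    using u w by (auto intro: gx_eq.gx_refl)
  ultimately show ?thesis
    unfolding GX_def gx_class_def by auto
qed

lemma GX_inv_gx_emb:
  assumes "group (GX X r0)" and r0_X: "r0 ` (X \<times> X) \<subseteq> X \<times> X" and x: "x \<in> X"
  shows "inv\<^bsub>GX X r0\<^esub> gx_emb X r0 x = gx_class X r0 [(x, False)]"
proof -
  interpret group "GX X r0" by fact
  have "gx_class X r0 [(x, False)] \<otimes>\<^bsub>GX X r0\<^esub> gx_emb X r0 x = gx_class X r0 [(x, False), (x, True)]"
    unfolding gx_emb_def using GX_mult_gx_class[OF r0_X] x by (simp add: is_word_def)
  also have "\<dots> = \<one>\<^bsub>GX X r0\<^esub>"
    using gx_class_eq[OF gx_eq.gx_inv[where b=False, OF x]] by (simp add: GX_def)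
  finally show ?thesis
    using x by (intro inv_equality) (auto simp: GX_def gx_emb_def is_word_def)
qed

lemma carrier_GX_eq_generate:
  assumes grp: "group (GX X r0)" and r0_X: "r0 ` (X \<times> X) \<subseteq> X \<times> X"
  shows "carrier (GX X r0) = generate (GX X r0) (gx_emb X r0 ` X)"
proof
  interpret group "GX X r0" by fact
  show "generate (GX X r0) (gx_emb X r0 ` X) \<subseteq> carrier (GX X r0)"
    by (rule generate_incl) (auto simp: GX_def gx_emb_def is_word_def)
  have "is_word X w \<Longrightarrow> gx_class X r0 w \<in> generate (GX X r0) (gx_emb X r0 ` X)" for w
  proof (induction w rule: rev_induct)
    case Nil
    have "gx_class X r0 [] = \<one>\<^bsub>GX X r0\<^esub>"
      by (simp add: GX_def)
    then show ?case
      by (simp add: generate.one)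
  next
    case (snoc l w)
    obtain x b where l: "l = (x, b)"
      by fastforce
    have w: "is_word X w" and x: "x \<in> X"
      using snoc.prems l by (auto simp: is_word_def)
    have "gx_class X r0 [(x, b)] \<in> generate (GX X r0) (gx_emb X r0 ` X)"
    proof (cases b)
      case True
      then show ?thesis
        using x by (auto simp: gx_emb_def intro: generate.incl)
    next
      case False
      have "inv\<^bsub>GX X r0\<^esub> gx_emb X r0 x \<in> generate (GX X r0) (gx_emb X r0 ` X)"
        using x by (intro generate.inv) simp
      then show ?thesis
        using GX_inv_gx_emb[OF grp r0_X x] False by simp
    qed
    moreover have "gx_class X r0 (w @ [l]) = gx_class X r0 w \<otimes>\<^bsub>GX X r0\<^esub> gx_class X r0 [(x, b)]"
      using GX_mult_gx_class[OF r0_X w, of "[(x, b)]"] x l by (simp add: is_word_def)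
    ultimately show ?case
      using snoc.IH w by (simp only: generate.eng)
  qed
  then show "carrier (GX X r0) \<subseteq> generate (GX X r0) (gx_emb X r0 ` X)"
    by (auto simp: GX_def)
qed

lemma lft_gx_emb:
  "\<lbrakk>assoc_sym_group_braiding X r0 r; x \<in> X; y \<in> X\<rbrakk> \<Longrightarrow>
    lft r (gx_emb X r0 x) (gx_emb X r0 y) = gx_emb X r0 (lft r0 x y)"
  and rgt_gx_emb:
  "\<lbrakk>assoc_sym_group_braiding X r0 r; x \<in> X; y \<in> X\<rbrakk> \<Longrightarrow>
    rgt r (gx_emb X r0 x) (gx_emb X r0 y) = gx_emb X r0 (rgt r0 x y)"
  by (simp_all add: assoc_sym_group_braiding_def lft_def rgt_def)

lemma lri_group_GX_if_Raut:
  assumes X: "symmetric_set X r0" and lri_X: "lri_set X r0"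
    and braiding: "assoc_sym_group_braiding X r0 r" and Raut: "Raut (GX X r0) r"
  shows "lri_group (GX X r0) r"
proof -
  interpret sym_group "GX X r0" r
    using braiding by (simp add: assoc_sym_group_braiding_def sym_group_def)
  have r0_X: "r0 ` (X \<times> X) \<subseteq> X \<times> X"
    using X by (simp add: symmetric_set_def bij_betw_def)
  then have lft_X: "lft r0 x y \<in> X" if "x \<in> X" "y \<in> X" for x y
    using that by (force simp: lft_def)
  have emb_carrier: "gx_emb X r0 ` X \<subseteq> carrier (GX X r0)"
    by (auto simp: GX_def gx_emb_def is_word_def)
  show ?thesis
  proof (rule lri_group_if_Raut[OF Raut emb_carrier carrier_GX_eq_generate[OF is_group r0_X]])
    fix e assume "e \<in> gx_emb X r0 ` X"
    then obtain x where x: "x \<in> X" and e: "e = gx_emb X r0 x"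
      by blast
    have "lft r0 x ` X = X"
      using X x by (simp add: symmetric_set_def bij_betw_def)
    moreover have "L e ` gx_emb X r0 ` X = gx_emb X r0 ` lft r0 x ` X"
      unfolding image_image using x braiding by (intro image_cong) (simp_all add: e lft_gx_emb)
    ultimately show "L e ` gx_emb X r0 ` X = gx_emb X r0 ` X"
      by simp
  next
    fix e e' assume "e \<in> gx_emb X r0 ` X" "e' \<in> gx_emb X r0 ` X"
    then obtain x y where "x \<in> X" "e = gx_emb X r0 x" "y \<in> X" "e' = gx_emb X r0 y"
      by blast
    then show "R (L e e') e = e'"
      using braiding lri_X lft_X by (simp add: lft_gx_emb rgt_gx_emb lri_set_def)
  qed
qed

theorem mainTheorem13:
  shows "(\<forall>(G :: ('g, 'm) monoid_scheme) r. symmetric_group G r \<and> lri_group G r \<longrightarrow>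
            Raut G r \<and>
            (\<forall>a \<in> carrier G. \<forall>u \<in> carrier G. \<forall>v \<in> carrier G.
               lft r (lft r v a) u \<otimes>\<^bsub>G\<^esub> lft r a v = lft r a u \<otimes>\<^bsub>G\<^esub> lft r (rgt r a u) v))
       \<and>
         (\<forall>(X :: 'x set) r0 r. symmetric_set X r0 \<and> lri_set X r0 \<and> assoc_sym_group_braiding X r0 r \<longrightarrow>
            (Raut (GX X r0) r \<longrightarrow> lri_group (GX X r0) r) \<and>
            (lri_group (GX X r0) r \<longleftrightarrow> Raut (GX X r0) r))"
proof (intro conjI allI impI ballI)
  fix G :: "('g, 'm) monoid_scheme" and r
  assume "symmetric_group G r \<and> lri_group G r"
  then interpret sym_group_lri G r
    by (simp add: sym_group_lri_def sym_group_def sym_group_lri_axioms_def)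
  show "Raut G r"
    by (rule Raut)
  show "L (L v a) u \<otimes>\<^bsub>G\<^esub> L a v = L a u \<otimes>\<^bsub>G\<^esub> L (R a u) v"
    if "a \<in> carrier G" "u \<in> carrier G" "v \<in> carrier G" for a u v
    using that by (rule L_L_mult_L_eq)
next
  fix X :: "'x set" and r0 r
  assume X: "symmetric_set X r0 \<and> lri_set X r0 \<and> assoc_sym_group_braiding X r0 r"
  then show Raut_lri: "Raut (GX X r0) r \<Longrightarrow> lri_group (GX X r0) r"
    using lri_group_GX_if_Raut by blast
  have "lri_group (GX X r0) r \<Longrightarrow> Raut (GX X r0) r"
    using X by (simp add: sym_group_lri.Raut sym_group_lri_def sym_group_def
        sym_group_lri_axioms_def assoc_sym_group_braiding_def)
  with Raut_lri show "lri_group (GX X r0) r \<longleftrightarrow> Raut (GX X r0) r"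
    by blast
qed

end
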